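(* Let $K\in\mathbb{N}$, $L>0$, and let $p$ be a probability density function on $\mathbb{R}^K$ that is $L$-Lipschitz continuous with respect to the $\ell_1$-norm. Then for all $\mathbf{x}\in\mathbb{R}^K$, \[ p(\mathbf{x})\le\Big(\frac{L^K(K+1)!}{2^K}\Big)^{\frac1{K+1}}. \] *)

theory Defs
  imports "HOL-Analysis.Analysis"
begin

text \<open>The l1 distance on R^K, with K = CARD('n).\<close>
definition l1_dist :: "real ^ 'n \<Rightarrow> real ^ 'n \<Rightarrow> real" where
  "l1_dist x y = (\<Sum>i\<in>UNIV. \<bar>x $ i - y $ i\<bar>)"

definition l1_lipschitz :: "real \<Rightarrow> (real ^ 'n \<Rightarrow> real) \<Rightarrow> bool" where
  "l1_lipschitz L p \<longleftrightarrow> (\<forall>x y. \<bar>p x - p y\<bar> \<le> L * l1_dist x y)"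

definition prob_density :: "(real ^ 'n \<Rightarrow> real) \<Rightarrow> bool" where
  "prob_density p \<longleftrightarrow> (\<forall>x. 0 \<le> p x) \<and> (p has_integral 1) UNIV"

end

theory Submission
  imports Defs
begin

text \<open>Since p is L-Lipschitz for the l1 norm, p z \<ge> p x - L |z - x|_1 everywhere, so
  1 = \<integral> p dominates the integral of the tent max 0 (p x - L |z - x|_1). Integrating
  out one coordinate at a time, that integral is 2^K (p x)^(K+1) / (L^K (K+1)!).\<close>

text \<open>The integral over R^n of max 0 (c - L |y|_1).\<close>
definition l1_tent_integral :: "nat \<Rightarrow> real \<Rightarrow> real \<Rightarrow> real" where
  "l1_tent_integral n L c = 2 ^ n * (max c 0) ^ (n + 1) / (L ^ n * fact (n + 1))"

lemma l1_tent_integral_nonneg: "L > 0 \<Longrightarrow> l1_tent_integral n L c \<ge> 0"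
  unfolding l1_tent_integral_def by simp

lemma l1_tent_integral_nonpos: "c \<le> 0 \<Longrightarrow> l1_tent_integral n L c = 0"
  unfolding l1_tent_integral_def by (simp add: max_def)

lemma l1_tent_integral_measurable [measurable]:
  "l1_tent_integral n L \<in> borel_measurable borel"
  unfolding l1_tent_integral_def by measurable

lemma has_integral_affine_power:
  fixes a b u v :: real
  assumes "b \<noteq> 0" and "u \<le> v"
  shows "((\<lambda>y. (a + b * y) ^ n) has_integral
           ((a + b * v) ^ Suc n - (a + b * u) ^ Suc n) / (b * Suc n)) {u..v}"
proof -
  have "((\<lambda>y. a + b * y) has_real_derivative b) (at y within {u..v})" for y
    by (auto intro!: derivative_eq_intros)
  from DERIV_cdivide[OF DERIV_power_Suc[OF this, of n], of "b * Suc n"]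
  have "((\<lambda>y. (a + b * y) ^ Suc n / (b * Suc n)) has_real_derivative (a + b * y) ^ n)
          (at y within {u..v})" for y
    by (rule DERIV_cong) (use assms(1) in \<open>simp add: add.commute\<close>)
  then have "((\<lambda>y. (a + b * y) ^ n) has_integral
               (a + b * v) ^ Suc n / (b * Suc n) - (a + b * u) ^ Suc n / (b * Suc n)) {u..v}"
    by (intro fundamental_theorem_of_calculus[OF assms(2)])
      (simp add: has_real_derivative_iff_has_vector_derivative)
  then show ?thesis
    by (simp only: diff_divide_distrib)
qed

lemma has_integral_l1_tent_integral_Suc:
  assumes "L > 0"
  shows "((\<lambda>y. l1_tent_integral n L (c - L * \<bar>y - y0\<bar>)) has_integral
           l1_tent_integral (Suc n) L c) UNIV"
proof (cases "c > 0")
  case False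
  with assms have "l1_tent_integral n L (c - L * \<bar>y - y0\<bar>) = 0" for y
    by (intro l1_tent_integral_nonpos) (simp add: order_trans[OF _ mult_nonneg_nonneg])
  moreover have "l1_tent_integral (Suc n) L c = 0"
    using False by (intro l1_tent_integral_nonpos) simp
  ultimately show ?thesis by simp
next
  case True
  let ?f = "\<lambda>y. l1_tent_integral n L (c - L * \<bar>y - y0\<bar>)"
  define r where "r = c / L"
  define k where "k = 2 ^ n / (L ^ n * fact (n + 1))"
  have r: "r > 0" "L * r = c"
    using assms True by (auto simp: r_def)
  have support: "c - L * \<bar>y - y0\<bar> \<ge> 0 \<longleftrightarrow> y \<in> {y0 - r..y0 + r}" for y
    using assms r by (auto simp: zero_le_mult_iff simp flip: r(2) right_diff_distrib)
  have tent_eq: "l1_tent_integral n L t = k * t ^ (n + 1)" if "t \<ge> 0" for t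
    using that by (simp add: l1_tent_integral_def k_def)
  define half where "half = k * c ^ (n + 2) / (L * (n + 2))"
  have left: "(?f has_integral half) {y0 - r..y0}"
  proof (rule has_integral_eq)
    show "((\<lambda>y. k * ((c - L * y0) + L * y) ^ (n + 1)) has_integral half) {y0 - r..y0}"
      using has_integral_mult_right[OF has_integral_affine_power, of L "y0 - r" y0 k "c - L * y0" "n + 1"]
        assms r by (simp add: half_def algebra_simps)
  next
    fix y assume "y \<in> {y0 - r..y0}"
    with support[of y] r show "k * ((c - L * y0) + L * y) ^ (n + 1) = ?f y"
      by (simp add: tent_eq algebra_simps)
  qed
  have right: "(?f has_integral half) {y0..y0 + r}"
  proof (rule has_integral_eq)
    show "((\<lambda>y. k * ((c + L * y0) + (- L) * y) ^ (n + 1)) has_integral half) {y0..y0 + r}"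
      using has_integral_mult_right[OF has_integral_affine_power, of "- L" y0 "y0 + r" k "c + L * y0" "n + 1"]
        assms r by (simp add: half_def algebra_simps minus_divide_right flip: minus_add_distrib)
  next
    fix y assume "y \<in> {y0..y0 + r}"
    with support[of y] r show "k * ((c + L * y0) + (- L) * y) ^ (n + 1) = ?f y"
      by (simp add: tent_eq algebra_simps)
  qed
  have "half + half = l1_tent_integral (Suc n) L c"
    using assms True by (simp add: half_def k_def l1_tent_integral_def field_simps)
  then have "(?f has_integral l1_tent_integral (Suc n) L c) {y0 - r..y0 + r}"
    using has_integral_combine[OF _ _ left right] r by simp
  then show ?thesis
    by (rule has_integral_on_superset) (use support l1_tent_integral_nonpos in force)+
qed

lemma nn_integral_PiM_l1_tent:
  assumes "L > 0" and "finite I"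
  shows "(\<integral>\<^sup>+ f. ennreal (c - L * (\<Sum>i\<in>I. \<bar>f i - y0 i\<bar>)) \<partial>(\<Pi>\<^sub>M i\<in>I. lborel))
           = ennreal (l1_tent_integral (card I) L c)"
  using assms(2)
proof (induction I arbitrary: c rule: finite_induct)
  case empty
  then show ?case
    by (simp add: PiM_empty l1_tent_integral_def ennreal_max_0 max.commute)
next
  case (insert i I c)
  interpret product_sigma_finite "\<lambda>_. lborel"
    by standard
  have "(\<integral>\<^sup>+ f. ennreal (c - L * (\<Sum>j\<in>insert i I. \<bar>f j - y0 j\<bar>)) \<partial>(\<Pi>\<^sub>M j\<in>insert i I. lborel))
      = (\<integral>\<^sup>+ y. \<integral>\<^sup>+ f. ennreal (c - L * (\<Sum>j\<in>insert i I. \<bar>(f(i := y)) j - y0 j\<bar>))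
           \<partial>(\<Pi>\<^sub>M j\<in>I. lborel) \<partial>lborel)"
    using insert.hyps by (intro product_nn_integral_insert_rev) auto
  also have "\<dots> = (\<integral>\<^sup>+ y. \<integral>\<^sup>+ f. ennreal ((c - L * \<bar>y - y0 i\<bar>) - L * (\<Sum>j\<in>I. \<bar>f j - y0 j\<bar>))
           \<partial>(\<Pi>\<^sub>M j\<in>I. lborel) \<partial>lborel)"
  proof (intro nn_integral_cong)
    fix y f
    have "(\<Sum>j\<in>I. \<bar>(f(i := y)) j - y0 j\<bar>) = (\<Sum>j\<in>I. \<bar>f j - y0 j\<bar>)"
      using insert.hyps by (intro sum.cong) auto
    with insert.hyps show "ennreal (c - L * (\<Sum>j\<in>insert i I. \<bar>(f(i := y)) j - y0 j\<bar>)) =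
        ennreal ((c - L * \<bar>y - y0 i\<bar>) - L * (\<Sum>j\<in>I. \<bar>f j - y0 j\<bar>))"
      by (simp add: algebra_simps)
  qed
  also have "\<dots> = (\<integral>\<^sup>+ y. ennreal (l1_tent_integral (card I) L (c - L * \<bar>y - y0 i\<bar>)) \<partial>lborel)"
    by (intro nn_integral_cong insert.IH)
  also have "\<dots> = ennreal (l1_tent_integral (Suc (card I)) L c)"
    using assms(1)
    by (intro nn_integral_has_integral_lborel has_integral_l1_tent_integral_Suc l1_tent_integral_nonneg)
      measurable
  finally show ?case
    using insert.hyps by simp
qed

lemma l1_dist_eq_sum_Basis:
  fixes x z :: "real ^ 'n"
  shows "l1_dist x z = (\<Sum>b\<in>Basis. \<bar>x \<bullet> b - z \<bullet> b\<bar>)"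
proof -
  have inj: "inj (\<lambda>i::'n. axis i (1::real))"
    by (auto simp: inj_on_def axis_eq_axis)
  have Basis: "(Basis :: (real ^ 'n) set) = range (\<lambda>i. axis i 1)"
    by (auto simp: Basis_vec_def)
  show ?thesis
    unfolding l1_dist_def Basis sum.reindex[OF inj]
    by (simp add: cart_eq_inner_axis inner_diff_left)
qed

lemma nn_integral_l1_tent:
  fixes x :: "real ^ 'n"
  assumes "L > 0"
  shows "(\<integral>\<^sup>+ z. ennreal (c - L * l1_dist x z) \<partial>lborel) = ennreal (l1_tent_integral CARD('n) L c)"
proof -
  have "(\<lambda>z. ennreal (c - L * l1_dist x z)) \<in> borel_measurable (lborel :: (real ^ 'n) measure)"
    unfolding l1_dist_def by measurable
  then have "(\<integral>\<^sup>+ z. ennreal (c - L * l1_dist x z) \<partial>lborel)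
      = (\<integral>\<^sup>+ f. ennreal (c - L * l1_dist x (\<Sum>b\<in>Basis. f b *\<^sub>R b)) \<partial>(\<Pi>\<^sub>M b\<in>Basis. lborel))"
    by (subst lborel_eq) (subst nn_integral_distr; simp)
  also have "\<dots> = (\<integral>\<^sup>+ f. ennreal (c - L * (\<Sum>b\<in>Basis. \<bar>f b - x \<bullet> b\<bar>)) \<partial>(\<Pi>\<^sub>M b\<in>Basis. lborel))"
    by (intro nn_integral_cong) (simp add: l1_dist_eq_sum_Basis abs_minus_commute)
  also have "\<dots> = ennreal (l1_tent_integral CARD('n) L c)"
    using assms by (simp add: nn_integral_PiM_l1_tent)
  finally show ?thesis .
qed

lemma l1_dist_le_dist:
  fixes x y :: "real ^ 'n"
  shows "l1_dist x y \<le> CARD('n) * dist x y"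
proof -
  have "l1_dist x y \<le> (\<Sum>i\<in>(UNIV::'n set). dist x y)"
    unfolding l1_dist_def dist_norm
    by (intro sum_mono) (metis component_le_norm_cart vector_minus_component)
  then show ?thesis
    by simp
qed

lemma l1_lipschitz_imp_continuous:
  fixes p :: "real ^ 'n \<Rightarrow> real"
  assumes "L \<ge> 0" and "l1_lipschitz L p"
  shows "continuous_on UNIV p"
proof (rule lipschitz_on_continuous_on)
  show "(L * CARD('n))-lipschitz_on UNIV p"
  proof (rule lipschitz_onI)
    fix u v :: "real ^ 'n"
    have "dist (p u) (p v) \<le> L * l1_dist u v"
      using assms(2) by (simp add: l1_lipschitz_def dist_real_def)
    also have "\<dots> \<le> L * CARD('n) * dist u v"
      using assms(1) l1_dist_le_dist[of u v] by (simp add: mult.assoc mult_left_mono)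
    finally show "dist (p u) (p v) \<le> L * CARD('n) * dist u v" .
  qed (use assms(1) in simp)
qed

lemma l1_tent_integral_density_le_1:
  fixes p :: "real ^ 'n \<Rightarrow> real"
  assumes "L > 0" and "prob_density p" and "l1_lipschitz L p"
  shows "l1_tent_integral CARD('n) L (p x) \<le> 1"
proof -
  have nonneg: "\<And>z. p z \<ge> 0" and integral: "(p has_integral 1) UNIV"
    using assms(2) by (auto simp: prob_density_def)
  have "p \<in> borel_measurable borel"
    using assms(1,3) by (intro borel_measurable_continuous_onI l1_lipschitz_imp_continuous) auto
  then have total: "(\<integral>\<^sup>+ z. ennreal (p z) \<partial>lborel) = 1"
    using nn_integral_has_integral_lborel[OF _ nonneg integral] by simp
  have "ennreal (l1_tent_integral CARD('n) L (p x)) = (\<integral>\<^sup>+ z. ennreal (p x - L * l1_dist x z) \<partial>lborel)"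
    using assms(1) by (simp add: nn_integral_l1_tent)
  also have "\<dots> \<le> (\<integral>\<^sup>+ z. ennreal (p z) \<partial>lborel)"
  proof (intro nn_integral_mono ennreal_leI)
    fix z
    have "\<bar>p x - p z\<bar> \<le> L * l1_dist x z"
      using assms(3) unfolding l1_lipschitz_def by blast
    then show "p x - L * l1_dist x z \<le> p z"
      by linarith
  qed
  finally show ?thesis
    using total by (simp add: ennreal_le_1)
qed

lemma le_powr_inverse_if_power_le:
  fixes a M :: real
  assumes "a \<ge> 0" and "a ^ Suc n \<le> M"
  shows "a \<le> M powr (1 / Suc n)"
proof -
  have "a = root (Suc n) (a ^ Suc n)"
    using assms(1) by (intro real_root_power_cancel[symmetric]) auto
  also have "\<dots> \<le> root (Suc n) M"
    using assms(2) by simp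
  also have "\<dots> = M powr (1 / Suc n)"
    using assms order_trans[OF zero_le_power] by (intro root_powr_inverse) blast+
  finally show ?thesis .
qed

theorem lemma4:
  fixes p :: "real ^ 'n \<Rightarrow> real" and L :: real
  assumes "L > 0"
    and "prob_density p"
    and "l1_lipschitz L p"
  shows "\<forall>x. p x \<le> (L ^ CARD('n) * fact (CARD('n) + 1) / 2 ^ CARD('n)) powr (1 / (real CARD('n) + 1))"
proof
  fix x
  let ?K = "CARD('n)"
  have nonneg: "p x \<ge> 0"
    using assms(2) by (simp add: prob_density_def)
  have "2 ^ ?K * p x ^ (?K + 1) / (L ^ ?K * fact (?K + 1)) \<le> 1"
    using l1_tent_integral_density_le_1[OF assms, of x] nonneg
    by (simp add: l1_tent_integral_def max_def)
  then have "2 ^ ?K * p x ^ Suc ?K \<le> L ^ ?K * fact (?K + 1)"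
    using assms(1) by (simp add: pos_divide_le_eq)
  then have "p x ^ Suc ?K \<le> L ^ ?K * fact (?K + 1) / 2 ^ ?K"
    by (simp add: pos_le_divide_eq mult.commute)
  then show "p x \<le> (L ^ ?K * fact (?K + 1) / 2 ^ ?K) powr (1 / (real ?K + 1))"
    using le_powr_inverse_if_power_le[OF nonneg] by (simp add: add.commute)
qed

end
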